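(* Let $\Bbbk$ be a field of characteristic $2$, $G=\langle\sigma\rangle$ cyclic of order $4$ acting on $V=V_3$ so that on the dual basis $\sigma x_1=x_1+x_2$, $\sigma x_2=x_2+x_3$, $\sigma x_3=x_3$, and let $H=\langle\sigma^2\rangle$. Let $A=\Bbbk[N^G(x_1),N^G_H(x_2),x_3]$ where $N^G(x_1)=\prod_{i=0}^3\sigma^i(x_1)$ and $N^G_H(x_2)=x_2\,\sigma(x_2)=x_2(x_2+x_3)$, and let $u=x_1^2x_3+x_1x_3^2+x_2^3+x_2^2x_3$. Then $\Bbbk[V]^G$ is a free $A$-module with basis $\{1,u\}$; in particular $r(\Bbbk[V]^G,A)=2$ and $s(\Bbbk[V]^G,A)=3$.
   Context: For graded $A$ with $A_0=\Bbbk$ and finitely generated graded $A$-module $M$, expand the Hilbert series quotient $H(M,t)/H(A,t)=a_0+a_1(t-1)+\cdots$ about $t=1$; $r(M,A)=a_0$ and $s(M,A)=a_1$. *)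

theory Defs
  imports "HOL-Analysis.Analysis" "HOL-Computational_Algebra.Polynomial"
begin

text \<open>The polynomial ring k[x1,x2,x3] is modelled as nested univariate polynomials
  ('k poly) poly) poly: the outermost variable is x1, the middle one x2, the innermost x3.\<close>

type_synonym 'k mpoly3 = "'k poly poly poly"

definition const3 :: "'k::comm_ring_1 \<Rightarrow> 'k mpoly3" where
  "const3 c = [:[:[:c:]:]:]"

definition X1 :: "'k::comm_ring_1 mpoly3" where "X1 = [:0, 1:]"
definition X2 :: "'k::comm_ring_1 mpoly3" where "X2 = [:[:0, 1:]:]"
definition X3 :: "'k::comm_ring_1 mpoly3" where "X3 = [:[:[:0, 1:]:]:]"

definition eval3 :: "'k::comm_ring_1 mpoly3 \<Rightarrow> 'k mpoly3 \<Rightarrow> 'k mpoly3 \<Rightarrow> 'k mpoly3 \<Rightarrow> 'k mpoly3" where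
  "eval3 p a b c =
     poly (map_poly (\<lambda>q. poly (map_poly (\<lambda>r. poly (map_poly const3 r) c) q) b) p) a"

definition sigma :: "'k::comm_ring_1 mpoly3 \<Rightarrow> 'k mpoly3" where
  "sigma p = eval3 p (X1 + X2) (X2 + X3) X3"

definition invariants :: "'k::comm_ring_1 mpoly3 set" where
  "invariants = {f. \<forall>n. (sigma ^^ n) f = f}"

definition NG_x1 :: "'k::comm_ring_1 mpoly3" where
  "NG_x1 = (\<Prod>i<4. (sigma ^^ i) X1)"

definition NGH_x2 :: "'k::comm_ring_1 mpoly3" where
  "NGH_x2 = X2 * sigma X2"

definition u_elem :: "'k::comm_ring_1 mpoly3" where
  "u_elem = X1^2 * X3 + X1 * X3^2 + X2^3 + X2^2 * X3"

definition gen_alg :: "'k::comm_ring_1 mpoly3 \<Rightarrow> 'k mpoly3 \<Rightarrow> 'k mpoly3 \<Rightarrow> 'k mpoly3 set" where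
  "gen_alg a b c = {eval3 P a b c | P. True}"

definition coeff3 :: "'k::zero mpoly3 \<Rightarrow> nat \<Rightarrow> nat \<Rightarrow> nat \<Rightarrow> 'k" where
  "coeff3 p i j k = coeff (coeff (coeff p i) j) k"

definition homogeneous :: "nat \<Rightarrow> 'k::zero mpoly3 \<Rightarrow> bool" where
  "homogeneous d p \<longleftrightarrow> (\<forall>i j k. coeff3 p i j k \<noteq> 0 \<longrightarrow> i + j + k = d)"

definition graded_part :: "'k::zero mpoly3 set \<Rightarrow> nat \<Rightarrow> 'k mpoly3 set" where
  "graded_part M d = {p \<in> M. homogeneous d p}"

definition scale3 :: "'k::comm_ring_1 \<Rightarrow> 'k mpoly3 \<Rightarrow> 'k mpoly3" where
  "scale3 c p = const3 c * p"

definition hilbert :: "'k::field mpoly3 set \<Rightarrow> real \<Rightarrow> real" where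
  "hilbert M t = (\<Sum>d. real (vector_space.dim scale3 (graded_part M d)) * t ^ d)"

text \<open>Expansion H(M,t)/H(A,t) = a0 + a1 (t-1) + ... about t = 1: a0 and a1.\<close>
definition r_inv :: "'k::field mpoly3 set \<Rightarrow> 'k mpoly3 set \<Rightarrow> real" where
  "r_inv M A = Lim (at_left 1) (\<lambda>t. hilbert M t / hilbert A t)"

definition s_inv :: "'k::field mpoly3 set \<Rightarrow> 'k mpoly3 set \<Rightarrow> real" where
  "s_inv M A = Lim (at_left 1) (\<lambda>t. (hilbert M t / hilbert A t - r_inv M A) / (t - 1))"

end

theory Submission
  imports Defs "HOL-Real_Asymp.Real_Asymp"
begin

text \<open>In characteristic 2 the norm NG_x1 = x1 (x1 + x2) (x1 + x3) (x1 + x2 + x3) is a monic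
  polynomial of degree 4 in x1 over k[x2,x3], and sigma fixes it. Division with remainder by
  NG_x1 therefore commutes with sigma, and by induction on the degree in x1 every invariant is
  an A-combination of invariants of x1-degree below 4. On the coefficients of such a remainder
  sigma acts through the involution x2 \<mapsto> x2 + x3 of k[x2,x3], whose invariants form
  k[x2 (x2 + x3), x3]; comparing the coefficients of the powers of x1 shows that the remainder
  is a + b u with a, b \<in> A. Comparing degrees in x1 once more shows that 1, u are free
  over A. The generators of A and u are homogeneous, of degrees 4, 2, 1 and 3, so
  dim Inv_d = dim A_d + dim A_(d-3), i.e. H(Inv, t) = (1 + t^3) H(A, t), whose expansion
  about t = 1 is 2 + 3 (t - 1) + \<dots>.\<close>

lemma char2_add_self:
  assumes "(2::'a::comm_ring_1) = 0" shows "x + x = (0::'a)"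
  by (metis assms mult_2 mult_zero_left)

lemma char2_poly:
  assumes "(2::'a::comm_ring_1) = 0" shows "(2::'a poly) = 0"
  using assms by (simp add: numeral_poly)

lemma char2_numeral:
  assumes "(2::'a::comm_ring_1) = 0"
  shows "(numeral (Num.Bit0 n) :: 'a) = 0" and "(numeral (Num.Bit1 n) :: 'a) = 1"
  by (simp_all only: numeral_Bit0 numeral_Bit1 char2_add_self[OF assms] add_0)

lemma char2_add_eq_iff:
  assumes "(2::'a::comm_ring_1) = 0" shows "a + b = c \<longleftrightarrow> a = c + (b::'a)"
  by (metis add.assoc add_0_right char2_add_self[OF assms])

lemma map_poly_add_hom:
  assumes "f 0 = 0" "\<And>x y. f (x + y) = f x + f y"
  shows "map_poly f (p + q) = map_poly f p + map_poly f q"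
  by (intro poly_eqI) (simp add: coeff_map_poly assms)

lemma map_poly_mult_hom:
  fixes f :: "'a::comm_semiring_1 \<Rightarrow> 'b::comm_semiring_1"
  assumes f0: "f 0 = 0" and add: "\<And>x y. f (x + y) = f x + f y" and mult: "\<And>x y. f (x * y) = f x * f y"
  shows "map_poly f (p * q) = map_poly f p * map_poly f q"
proof (induct p)
  case (pCons a p)
  have "map_poly f (pCons a p * q) = map_poly f (smult a q) + map_poly f (pCons 0 (p * q))"
    by (simp add: map_poly_add_hom f0 add)
  also have "\<dots> = pCons (f a) (map_poly f p) * map_poly f q"
    by (simp add: map_poly_smult f0 mult map_poly_pCons pCons.hyps)
  finally show ?case by (simp add: map_poly_pCons f0)
qed simp

lemma poly_map_poly_hom:
  fixes f :: "'a::comm_semiring_1 \<Rightarrow> 'b::comm_semiring_1"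
  assumes "f 0 = 0" "\<And>x y. f (x + y) = f x + f y" "\<And>x y. f (x * y) = f x * f y"
  shows "poly (map_poly f (p + q)) z = poly (map_poly f p) z + poly (map_poly f q) z"
    and "poly (map_poly f (p * q)) z = poly (map_poly f p) z * poly (map_poly f q) z"
  by (simp_all add: map_poly_add_hom map_poly_mult_hom assms)

lemma poly_map_poly_closed:
  assumes "\<And>x y. x \<in> S \<Longrightarrow> y \<in> S \<Longrightarrow> x + y \<in> S"
    and "\<And>x y. x \<in> S \<Longrightarrow> y \<in> S \<Longrightarrow> x * y \<in> S"
    and "0 \<in> S" "z \<in> S" "f 0 = 0" "\<And>x. f x \<in> S"
  shows "poly (map_poly f p) z \<in> S"
  by (induct p) (simp_all add: map_poly_pCons assms)

lemma monic_divmod: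
  fixes f g :: "'a::comm_ring_1 poly"
  assumes "lead_coeff g = 1" "degree g > 0"
  obtains q r where "f = g * q + r" "degree r < degree g"
proof -
  obtain q r where qr: "pseudo_divmod f g = (q, r)" by (cases "pseudo_divmod f g") auto
  have g: "g \<noteq> 0" using assms by auto
  have "f = g * q + r" using pseudo_divmod(1)[OF g qr] assms by simp
  moreover have "degree r < degree g" using pseudo_divmod(2)[OF g qr] assms by auto
  ultimately show ?thesis by (rule that)
qed

lemma fixed_quotient_remainder:
  fixes \<phi> :: "'a::idom poly \<Rightarrow> 'a poly"
  assumes add: "\<And>x y. \<phi> (x + y) = \<phi> x + \<phi> y" and mult: "\<And>x y. \<phi> (x * y) = \<phi> x * \<phi> y"
    and deg: "\<And>x. degree (\<phi> x) = degree x"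
    and "\<phi> g = g" "\<phi> (g * q + r) = g * q + r" "degree r < degree g"
  shows "\<phi> q = q" "\<phi> r = r"
proof -
  have eq: "g * (\<phi> q - q) = r - \<phi> r"
    using assms(4,5) by (simp add: add mult algebra_simps)
  have "degree (r - \<phi> r) < degree g"
    using degree_diff_le_max[of r "\<phi> r"] deg[of r] assms(6) by linarith
  then show "\<phi> q = q"
    using eq degree_mult_eq[of g "\<phi> q - q"] by (cases "g = 0") (auto simp: assms(6))
  then show "\<phi> r = r" using eq by simp
qed

lemma degree_less_add_mult_eq_0:
  fixes c N x :: "'a::idom poly"
  assumes "degree c < degree N" "c + N * x = 0"
  shows "x = 0" and "c = 0"
proof -
  show "x = 0"
  proof (rule ccontr)
    assume "x \<noteq> 0"
    moreover have "N \<noteq> 0" using assms(1) by auto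
    ultimately have "degree N \<le> degree (N * x)" by (simp add: degree_mult_eq)
    moreover have "c = - (N * x)" using assms(2) by (simp add: eq_neg_iff_add_eq_0)
    ultimately show False using assms(1) by simp
  qed
  then show "c = 0" using assms(2) by simp
qed

lemma degree_less_2_pCons: "degree (r::'a::zero poly) < 2 \<Longrightarrow> r = [:coeff r 0, coeff r 1:]"
  by (auto simp: poly_eq_iff coeff_pCons coeff_eq_0 split: nat.split)

lemma degree_less_4_pCons:
  "degree (r::'a::zero poly) < 4 \<Longrightarrow> r = [:coeff r 0, coeff r 1, coeff r 2, coeff r 3:]"
  by (auto simp: poly_eq_iff coeff_pCons coeff_eq_0 numeral_eq_Suc split: nat.split)

lemma const3_0 [simp]: "const3 0 = 0"
  and const3_1 [simp]: "const3 1 = 1"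
  and const3_add: "const3 (x + y) = const3 x + const3 y"
  and const3_mult: "const3 (x * y) = const3 x * const3 y"
  by (simp_all add: const3_def one_pCons)

lemma eval3_add: "eval3 (p + q) a b c = eval3 p a b c + eval3 q a b c"
  and eval3_mult: "eval3 (p * q) a b c = eval3 p a b c * eval3 q a b c"
proof -
  define E1 where "E1 = (\<lambda>r. poly (map_poly const3 r) c)"
  define E2 where "E2 = (\<lambda>q. poly (map_poly E1 q) b)"
  have E1: "E1 0 = 0" "E1 (x + y) = E1 x + E1 y" "E1 (x * y) = E1 x * E1 y" for x y
    unfolding E1_def by (simp_all add: poly_map_poly_hom const3_add const3_mult)
  have E2: "E2 0 = 0" "E2 (x + y) = E2 x + E2 y" "E2 (x * y) = E2 x * E2 y" for x y
    unfolding E2_def by (simp_all add: poly_map_poly_hom E1)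
  have "eval3 p a b c = poly (map_poly E2 p) a" for p
    by (simp add: eval3_def E1_def E2_def)
  then show "eval3 (p + q) a b c = eval3 p a b c + eval3 q a b c"
    and "eval3 (p * q) a b c = eval3 p a b c * eval3 q a b c"
    by (simp_all add: poly_map_poly_hom E2)
qed

lemma eval3_pCons: "eval3 (pCons q p) a b c = eval3 [:q:] a b c + a * eval3 p a b c"
  by (simp add: eval3_def map_poly_pCons)

lemma eval3_const3 [simp]: "eval3 (const3 k) a b c = const3 k"
  by (simp add: eval3_def const3_def map_poly_pCons)

lemma eval3_X1 [simp]: "eval3 X1 a b c = a"
  and eval3_X2 [simp]: "eval3 X2 a b c = b"
  and eval3_X3 [simp]: "eval3 X3 a b c = c"
  by (simp_all add: eval3_def X1_def X2_def X3_def map_poly_pCons map_poly_1)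

lemma gen_alg_add: "x \<in> gen_alg a b c \<Longrightarrow> y \<in> gen_alg a b c \<Longrightarrow> x + y \<in> gen_alg a b c"
  and gen_alg_mult: "x \<in> gen_alg a b c \<Longrightarrow> y \<in> gen_alg a b c \<Longrightarrow> x * y \<in> gen_alg a b c"
proof -
  assume "x \<in> gen_alg a b c" "y \<in> gen_alg a b c"
  then obtain P Q where "x = eval3 P a b c" "y = eval3 Q a b c" by (auto simp: gen_alg_def)
  then have "x + y = eval3 (P + Q) a b c" "x * y = eval3 (P * Q) a b c"
    by (simp_all add: eval3_add eval3_mult)
  then show "x + y \<in> gen_alg a b c" "x * y \<in> gen_alg a b c" by (auto simp: gen_alg_def)
qed

lemma const3_in_gen_alg: "const3 k \<in> gen_alg a b c"
  and generators_in_gen_alg: "a \<in> gen_alg a b c" "b \<in> gen_alg a b c" "c \<in> gen_alg a b c"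
  unfolding gen_alg_def
  by (intro CollectI exI[of _ "const3 k"] exI[of _ X1] exI[of _ X2] exI[of _ X3]; simp)+

lemma zero_in_gen_alg: "0 \<in> gen_alg a b c"
  using const3_in_gen_alg[of 0] by simp

lemma gen_alg_sum: "(\<And>i. i \<in> I \<Longrightarrow> f i \<in> gen_alg a b c) \<Longrightarrow> sum f I \<in> gen_alg a b c"
  by (induct I rule: infinite_finite_induct)
    (auto intro: gen_alg_add zero_in_gen_alg)

lemma gen_alg_subset:
  assumes add: "\<And>x y. x \<in> S \<Longrightarrow> y \<in> S \<Longrightarrow> x + y \<in> S"
    and mult: "\<And>x y. x \<in> S \<Longrightarrow> y \<in> S \<Longrightarrow> x * y \<in> S"
    and const: "\<And>k. const3 k \<in> S" and "a \<in> S" "b \<in> S" "c \<in> S"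
  shows "gen_alg a b c \<subseteq> S"
proof -
  have "0 \<in> S" using const[of 0] by simp
  note closed = poly_map_poly_closed[of S, OF add mult this]
  show ?thesis
    unfolding gen_alg_def eval3_def using assms by (auto intro!: closed)
qed

section \<open>The generator sigma\<close>

lemma sigma_add: "sigma (p + q) = sigma p + sigma q"
  and sigma_mult: "sigma (p * q) = sigma p * sigma q"
  by (simp_all add: sigma_def eval3_add eval3_mult)

lemma sigma_1: "sigma 1 = 1"
  by (metis const3_1 eval3_const3 sigma_def)

lemma sigma_power: "sigma (p ^ n) = sigma p ^ n"
  by (induct n) (simp_all add: sigma_mult sigma_1)

lemma sigma_const3 [simp]: "sigma (const3 k) = const3 k"
  by (simp add: sigma_def)

lemma sigma_X1: "sigma X1 = X1 + X2"
  and sigma_X2: "sigma X2 = X2 + X3"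
  and sigma_X3: "sigma X3 = X3"
  by (simp_all add: sigma_def)

lemma invariants_eq: "(invariants :: 'k::comm_ring_1 mpoly3 set) = {f. sigma f = f}"
proof -
  have "(\<forall>n. (sigma ^^ n) f = f) \<longleftrightarrow> sigma f = f" for f :: "'k::comm_ring_1 mpoly3"
  proof
    assume "\<forall>n. (sigma ^^ n) f = f"
    then have "(sigma ^^ 1) f = f" ..
    then show "sigma f = f" by simp
  next
    assume "sigma f = f"
    then show "\<forall>n. (sigma ^^ n) f = f" by (intro allI, induct_tac n) simp_all
  qed
  then show ?thesis by (simp add: invariants_def)
qed

lemma char2_mpoly3:
  assumes "(2::'k::comm_ring_1) = 0" shows "(2::'k mpoly3) = 0"
  using char2_poly[OF char2_poly[OF char2_poly[OF assms]]] .

lemma NG_x1_char2: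
  assumes char2: "(2::'k::comm_ring_1) = 0"
  shows "(NG_x1 :: 'k mpoly3) = X1 * (X1 + X2) * (X1 + X3) * (X1 + X2 + X3)"
proof -
  have "(NG_x1 :: 'k mpoly3) = X1 * sigma X1 * sigma (sigma X1) * sigma (sigma (sigma X1))"
    by (simp add: NG_x1_def numeral_eq_Suc lessThan_Suc mult_ac)
  also have "\<dots> = X1 * (X1 + X2) * (X1 + X3 + 2 * X2) * (X1 + X2 + X3 + 2 * (X2 + X3))"
    by (simp only: sigma_add sigma_X1 sigma_X2 sigma_X3) (simp add: algebra_simps)
  finally show ?thesis by (simp add: char2_mpoly3[OF char2])
qed

lemma sigma_NG_x1:
  assumes char2: "(2::'k::comm_ring_1) = 0"
  shows "sigma (NG_x1 :: 'k mpoly3) = NG_x1"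
proof -
  have "sigma (NG_x1 :: 'k mpoly3)
      = (X1 + X2) * (X1 + X3 + 2 * X2) * (X1 + X2 + X3) * (X1 + 2 * (X2 + X3))"
    by (simp only: NG_x1_char2[OF char2] sigma_add sigma_mult sigma_X1 sigma_X2 sigma_X3)
      (simp add: algebra_simps)
  also have "\<dots> = NG_x1"
    by (simp add: NG_x1_char2[OF char2] char2_mpoly3[OF char2] mult_ac)
  finally show ?thesis .
qed

lemma NGH_x2_eq: "NGH_x2 = X2 * (X2 + X3)"
  by (simp add: NGH_x2_def sigma_X2)

lemma sigma_NGH_x2:
  assumes char2: "(2::'k::comm_ring_1) = 0"
  shows "sigma (NGH_x2 :: 'k mpoly3) = NGH_x2"
proof -
  have "sigma (NGH_x2 :: 'k mpoly3) = NGH_x2 + 2 * (X2 + X3) * X3"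
    by (simp only: NGH_x2_eq sigma_add sigma_mult sigma_X2 sigma_X3) (simp add: algebra_simps)
  then show ?thesis by (simp add: char2_mpoly3[OF char2])
qed

lemma sigma_u_elem:
  assumes char2: "(2::'k::comm_ring_1) = 0"
  shows "sigma (u_elem :: 'k mpoly3) = u_elem"
proof -
  have "sigma (u_elem :: 'k mpoly3) = u_elem + 2 * (X1 * X2 * X3 + 2 * X2^2 * X3 + 3 * X2 * X3^2 + X3^3)"
    by (simp only: u_elem_def sigma_add sigma_mult sigma_power sigma_X1 sigma_X2 sigma_X3)
      (simp add: power2_eq_square power3_eq_cube algebra_simps)
  then show ?thesis by (simp add: char2_mpoly3[OF char2])
qed

abbreviation algA :: "'k::comm_ring_1 mpoly3 set" where
  "algA \<equiv> gen_alg NG_x1 NGH_x2 X3"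

lemma gen_alg_sigma_fixed:
  assumes char2: "(2::'k::comm_ring_1) = 0"
  shows "(algA :: 'k mpoly3 set) \<subseteq> {f. sigma f = f}"
proof (rule gen_alg_subset)
  show "x + y \<in> {f. sigma f = f}" "x * y \<in> {f. sigma f = f}"
    if "x \<in> {f. sigma f = f}" "y \<in> {f. sigma f = f}" for x y :: "'k mpoly3"
    using that by (simp_all add: sigma_add sigma_mult)
qed (simp_all add: sigma_X3 sigma_NG_x1[OF char2] sigma_NGH_x2[OF char2])

definition y2 :: "'k::comm_ring_1 poly poly" where "y2 = [:0, 1:]"

definition y3 :: "'k::comm_ring_1 poly poly" where "y3 = [:[:0, 1:]:]"

lemma X_nested: "X1 = [:0, 1:]" "X2 = [:y2:]" "X3 = [:y3:]"
  by (simp_all add: X1_def X2_def X3_def y2_def y3_def)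

lemma y3_nonzero [simp]: "(y3 :: 'k::comm_ring_1 poly poly) \<noteq> 0"
  by (simp add: y3_def)

definition norm2 :: "'k::comm_ring_1 poly poly" where "norm2 = y2 * (y2 + y3)"

lemma norm2_coeffs: "norm2 = [:0, [:0, 1:], 1:]"
  by (simp add: norm2_def y2_def y3_def)

lemma degree_norm2 [simp]: "degree (norm2 :: 'k::idom poly poly) = 2"
  by (simp add: norm2_coeffs)

lemma lead_coeff_norm2 [simp]: "lead_coeff (norm2 :: 'k::idom poly poly) = 1"
  by (simp add: norm2_coeffs numeral_2_eq_2)

lemma NGH_x2_nested: "NGH_x2 = [:norm2:]"
  by (simp add: NGH_x2_eq X_nested norm2_def)

lemma NG_x1_nested:
  assumes char2: "(2::'k::comm_ring_1) = 0"
  shows "(NG_x1 :: 'k mpoly3) = [:0, 1:] * [:y2, 1:] * [:y3, 1:] * [:y2 + y3, 1:]"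
  by (simp add: NG_x1_char2[OF char2] X_nested)

lemma degree_NG_x1:
  assumes char2: "(2::'k::idom) = 0" shows "degree (NG_x1 :: 'k mpoly3) = 4"
  by (simp add: NG_x1_nested[OF char2] degree_mult_eq)

lemma lead_coeff_NG_x1:
  assumes char2: "(2::'k::idom) = 0" shows "lead_coeff (NG_x1 :: 'k mpoly3) = 1"
  by (simp add: NG_x1_nested[OF char2] lead_coeff_mult)

lemma u_elem_nested: "u_elem = [:y2 * norm2, y3^2, y3:]"
  by (simp add: u_elem_def X_nested norm2_def power2_eq_square power3_eq_cube algebra_simps)

lemma degree_u_elem: "degree (u_elem :: 'k::comm_ring_1 mpoly3) = 2"
  by (simp add: u_elem_nested y3_def)

lemma eval3_const_poly: "eval3 [:q:] a [:n:] X3 = [:pcompose q (n :: 'k::comm_ring_1 poly poly):]"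
proof -
  have "poly (map_poly const3 r) X3 = [:[:r:]:]" for r :: "'k poly"
    by (induct r) (simp_all add: map_poly_pCons const3_def X3_def)
  moreover have "poly (map_poly (\<lambda>r. [:[:r:]:]) q) [:n:] = [:pcompose q n:]"
    by (induct q) (simp_all add: map_poly_pCons pcompose_pCons)
  ultimately show ?thesis by (simp add: eval3_def map_poly_pCons)
qed

lemma pcompose_norm2_in_gen_alg: "[:pcompose Q norm2:] \<in> gen_alg a NGH_x2 X3"
  using eval3_const_poly[of Q a norm2] unfolding gen_alg_def NGH_x2_nested
  by (metis (mono_tags, lifting) mem_Collect_eq)

definition sigma23 :: "'k::comm_ring_1 poly poly \<Rightarrow> 'k poly poly" where
  "sigma23 q = pcompose q (y2 + y3)"

lemma sigma23_0 [simp]: "sigma23 0 = 0"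
  and sigma23_1 [simp]: "sigma23 1 = 1"
  and sigma23_const [simp]: "sigma23 [:c:] = [:c:]"
  and sigma23_add [simp]: "sigma23 (p + q) = sigma23 p + sigma23 q"
  and sigma23_mult [simp]: "sigma23 (p * q) = sigma23 p * sigma23 q"
  and sigma23_y2: "sigma23 y2 = y2 + y3"
  and sigma23_y3 [simp]: "sigma23 y3 = y3"
  by (simp_all add: sigma23_def pcompose_add pcompose_mult pcompose_1 y2_def y3_def pcompose_pCons)

lemma sigma23_power [simp]: "sigma23 (p ^ n) = sigma23 p ^ n"
  by (induct n) simp_all

lemma degree_sigma23 [simp]: "degree (sigma23 (q :: 'k::idom poly poly)) = degree q"
  by (simp add: sigma23_def degree_pcompose y2_def y3_def)

lemma sigma23_eq_0_iff [simp]: "sigma23 (q :: 'k::idom poly poly) = 0 \<longleftrightarrow> q = 0"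
  by (simp add: sigma23_def pcompose_eq_0_iff y2_def y3_def)

lemma sigma23_involution:
  assumes char2: "(2::'k::comm_ring_1) = 0" shows "sigma23 (sigma23 q) = (q :: 'k poly poly)"
proof -
  have "pcompose (y2 + y3) (y2 + y3) = (y2 :: 'k poly poly)"
    by (simp add: y2_def y3_def pcompose_pCons char2_add_self[OF char2_poly[OF char2]])
  then show ?thesis by (simp add: sigma23_def flip: pcompose_assoc) (simp add: y2_def)
qed

lemma sigma23_norm2:
  assumes char2: "(2::'k::comm_ring_1) = 0" shows "sigma23 (norm2 :: 'k poly poly) = norm2"
proof -
  have "sigma23 (norm2 :: 'k poly poly) = norm2 + 2 * y3 * (y2 + y3)"
    by (simp add: norm2_def sigma23_y2 algebra_simps)
  then show ?thesis by (simp add: char2_poly[OF char2_poly[OF char2]])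
qed

lemma sigma_nested: "sigma p = pcompose (map_poly sigma23 p) [:y2, 1:]"
proof (induct p)
  case (pCons q p)
  have "X1 + X2 = [:y2, 1:]" "X2 + X3 = [:y2 + y3:]"
    by (simp_all add: X_nested)
  then have "sigma (pCons q p) = eval3 [:q:] [:y2, 1:] [:y2 + y3:] X3 + [:y2, 1:] * sigma p"
    unfolding sigma_def by (metis eval3_pCons)
  then show ?case
    using pCons by (simp add: eval3_const_poly map_poly_pCons pcompose_pCons sigma23_def)
qed (metis const3_0 sigma_const3 map_poly_0 pcompose_0)

lemma degree_sigma [simp]: "degree (sigma (p :: 'k::idom mpoly3)) = degree p"
  by (simp add: sigma_nested degree_pcompose degree_map_poly)

lemma sigma_cubic:
  "sigma [:r0, r1, r2, r3:] =
    [:sigma23 r0 + y2 * sigma23 r1 + y2^2 * sigma23 r2 + y2^3 * sigma23 r3,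
      sigma23 r1 + 2 * y2 * sigma23 r2 + 3 * y2^2 * sigma23 r3,
      sigma23 r2 + 3 * y2 * sigma23 r3, sigma23 r3:]"
  by (simp add: sigma_nested map_poly_pCons pcompose_pCons algebra_simps power2_eq_square power3_eq_cube)

section \<open>The invariant ring\<close>

lemma sigma23_fixed_pcompose_norm2:
  fixes q :: "'k::field poly poly"
  assumes char2: "(2::'k) = 0" and "sigma23 q = q"
  shows "\<exists>Q. q = pcompose Q norm2"
  using assms(2)
proof (induct "degree q" arbitrary: q rule: less_induct)
  case less
  obtain s r where qsr: "q = norm2 * s + r" and dr: "degree r < 2"
    using monic_divmod[OF lead_coeff_norm2, of q] by auto
  note fixed = fixed_quotient_remainder[of sigma23, OF sigma23_add sigma23_mult degree_sigma23
      sigma23_norm2[OF char2]]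
  have s: "sigma23 s = s" and "sigma23 r = r"
    using fixed[of s r] less.prems qsr dr by simp_all
  moreover have "sigma23 [:c0, c1:] = [:c0 + [:0, 1:] * c1, c1:]" for c0 c1 :: "'k poly"
    by (simp add: sigma23_def y2_def y3_def pcompose_pCons)
  ultimately have "[:0, 1:] * coeff r 1 = 0"
    using degree_less_2_pCons[OF dr] by (metis add_cancel_left_right pCons_eq_iff)
  then have r0: "r = [:coeff r 0:]"
    using degree_less_2_pCons[OF dr] by simp
  show ?case
  proof (cases "s = 0")
    case True
    then show ?thesis using qsr r0 by (metis add_0 mult_zero_right pcompose_const)
  next
    case False
    moreover have "(norm2 :: 'k poly poly) \<noteq> 0"
      using degree_norm2 by (metis degree_0 zero_neq_numeral)
    ultimately have "degree q = 2 + degree s"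
      using qsr dr degree_add_eq_left[of r "norm2 * s"] by (simp add: degree_mult_eq)
    then obtain S where "s = pcompose S norm2" using less.hyps[of s] s by auto
    then show ?thesis using qsr r0 by (intro exI[of _ "pCons (coeff r 0) S"]) (simp add: pcompose_pCons)
  qed
qed

lemma y3_dvd_sigma23_diff: "y3 dvd sigma23 q - q"
proof (induct q)
  case (pCons c q)
  have "sigma23 (pCons c q) = [:c:] + (y2 + y3) * sigma23 q"
    by (simp add: sigma23_def pcompose_pCons)
  moreover have "pCons c q = [:c:] + y2 * q"
    by (simp add: y2_def)
  ultimately have "sigma23 (pCons c q) - pCons c q = y2 * (sigma23 q - q) + y3 * sigma23 q"
    by (simp add: algebra_simps)
  then show ?case using pCons by simp
qed simp

lemma y3_dvd_norm2_mult:
  assumes "y3 dvd norm2 * b" shows "y3 dvd (b :: 'k::idom poly poly)"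
  unfolding y3_def const_poly_dvd_iff
proof
  fix n
  have "coeff (norm2 * b) (Suc (Suc n)) = coeff b n + [:0, 1:] * coeff b (Suc n)"
    by (simp add: norm2_coeffs)
  moreover have "[:0, 1:] dvd coeff (norm2 * b) (Suc (Suc n))"
    using assms by (simp add: y3_def const_poly_dvd_iff)
  ultimately show "[:0, 1:] dvd coeff b n"
    by (metis dvd_add_left_iff dvd_triv_left)
qed

lemma sigma_fixed_cubic_coeffs:
  fixes r0 r1 r2 r3 :: "'k::field poly poly"
  assumes char2: "(2::'k) = 0" and fixed: "sigma [:r0, r1, r2, r3:] = [:r0, r1, r2, r3:]"
  shows "r3 = 0" "r1 = y3 * r2" "sigma23 r2 = r2" "sigma23 r0 = r0 + norm2 * r2"
proof -
  have two: "(2 :: 'k poly poly) = 0" using char2_poly[OF char2_poly[OF char2]] .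
  note swap = char2_add_eq_iff[OF two]
  note involution = sigma23_involution[OF char2]
  have E: "sigma23 r0 + y2 * sigma23 r1 + y2^2 * sigma23 r2 + y2^3 * r3 = r0"
    "sigma23 r1 + y2^2 * r3 = r1" "sigma23 r2 + y2 * r3 = r2" "sigma23 r3 = r3"
    using fixed unfolding sigma_cubic pCons_eq_iff by (auto simp: char2_numeral[OF two])
  have sigma_r2: "sigma23 r2 = r2 + y2 * r3" using E(3) swap by simp
  have "r2 = sigma23 (r2 + y2 * r3)" using sigma_r2 involution by metis
  also have "\<dots> = r2 + y3 * r3 + 2 * (y2 * r3)" using E(4) sigma_r2 by (simp add: sigma23_y2 algebra_simps)
  finally show r3: "r3 = 0" using two by simp
  show r2_fixed: "sigma23 r2 = r2" using sigma_r2 r3 by simp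
  have r1_fixed: "sigma23 r1 = r1" using E(2) r3 by simp
  have sigma_r0: "sigma23 r0 = r0 + (y2 * r1 + y2^2 * r2)"
    using E(1) r3 r1_fixed r2_fixed swap by (simp add: add.assoc)
  have "r0 = sigma23 (r0 + (y2 * r1 + y2^2 * r2))" using sigma_r0 involution by metis
  also have "\<dots> = r0 + y3 * (r1 + y3 * r2) + 2 * (y2 * r1 + y2^2 * r2 + y2 * y3 * r2)"
    using sigma_r0 r1_fixed r2_fixed by (simp add: sigma23_y2 algebra_simps power2_eq_square)
  finally have "r1 + y3 * r2 = 0" using two by simp
  then show r1: "r1 = y3 * r2" using swap[of r1 "y3 * r2" 0] by simp
  show "sigma23 r0 = r0 + norm2 * r2" using sigma_r0 r1 by (simp add: norm2_def algebra_simps power2_eq_square)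
qed

lemma sigma_fixed_cubic_decomp:
  fixes r :: "'k::field mpoly3"
  assumes char2: "(2::'k) = 0" and "degree r < 4" and "sigma r = r"
  shows "\<exists>a \<in> algA. \<exists>b \<in> algA. r = a + b * u_elem"
proof -
  have two: "(2 :: 'k poly poly) = 0" using char2_poly[OF char2_poly[OF char2]] .
  define r0 r1 r2 r3 where "r0 = coeff r 0" "r1 = coeff r 1" "r2 = coeff r 2" "r3 = coeff r 3"
  have r: "r = [:r0, r1, r2, r3:]"
    unfolding r0_r1_r2_r3_def using degree_less_4_pCons assms(2) .
  note coeffs = sigma_fixed_cubic_coeffs[OF char2, of r0 r1 r2 r3, folded r, OF assms(3)]
  have "y3 dvd norm2 * r2"
    using y3_dvd_sigma23_diff[of r0] coeffs(4) by simp
  then obtain b where b: "r2 = y3 * b"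
    using y3_dvd_norm2_mult by blast
  then have "sigma23 b = b" using coeffs(3) by simp
  then obtain Q2 where Q2: "b = pcompose Q2 norm2"
    using sigma23_fixed_pcompose_norm2[OF char2] by blast
  have "sigma23 (r0 + y2 * norm2 * b) = r0 + y2 * norm2 * b + 2 * (y3 * norm2 * b)"
    using coeffs(4) \<open>sigma23 b = b\<close> b
    by (simp add: sigma23_y2 sigma23_norm2[OF char2] algebra_simps)
  then obtain Q1 where Q1: "r0 + y2 * norm2 * b = pcompose Q1 norm2"
    using sigma23_fixed_pcompose_norm2[OF char2] two by fastforce
  have "[:pcompose Q1 norm2:] + [:pcompose Q2 norm2:] * u_elem = r + [:2 * (y2 * norm2 * b):]"
    unfolding r coeffs(1,2) b u_elem_nested Q1[symmetric] Q2[symmetric]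
    by (simp add: algebra_simps power2_eq_square)
  then show ?thesis
    using pcompose_norm2_in_gen_alg two by (metis add_0_right mult_zero_left pCons_0_0)
qed

lemma sigma_fixed_decomp:
  fixes f :: "'k::field mpoly3"
  assumes char2: "(2::'k) = 0" and "sigma f = f"
  shows "\<exists>a \<in> algA. \<exists>b \<in> algA. f = a + b * u_elem"
  using assms(2)
proof (induct "degree f" arbitrary: f rule: less_induct)
  case less
  obtain q r where fqr: "f = NG_x1 * q + r" and dr: "degree r < 4"
    using monic_divmod[OF lead_coeff_NG_x1[OF char2], of f] degree_NG_x1[OF char2] by auto
  note fixed = fixed_quotient_remainder[of sigma, OF sigma_add sigma_mult degree_sigma sigma_NG_x1[OF char2]]
  have sq: "sigma q = q" and sr: "sigma r = r"
    using fixed[of q r] less.prems fqr dr degree_NG_x1[OF char2] by simp_all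
  obtain a b where ab: "a \<in> algA" "b \<in> algA" "r = a + b * u_elem"
    using sigma_fixed_cubic_decomp[OF char2 dr sr] by blast
  obtain a' b' where ab': "a' \<in> algA" "b' \<in> algA"
    "q = a' + b' * u_elem"
  proof (cases "q = 0")
    case True
    show ?thesis using True zero_in_gen_alg by (intro that[of 0 0]) simp_all
  next
    case False
    moreover have "(NG_x1 :: 'k mpoly3) \<noteq> 0"
      using degree_NG_x1[OF char2] by auto
    ultimately have "degree f = 4 + degree q"
      using fqr dr degree_add_eq_left[of r "NG_x1 * q"] degree_NG_x1[OF char2]
      by (simp add: degree_mult_eq)
    then show ?thesis using less.hyps[of q] sq that by auto
  qed
  have "f = (NG_x1 * a' + a) + (NG_x1 * b' + b) * u_elem"
    using fqr ab(3) ab'(3) by (simp add: algebra_simps)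
  moreover have "NG_x1 * a' + a \<in> algA" "NG_x1 * b' + b \<in> algA"
    using ab ab' by (simp_all add: gen_alg_add gen_alg_mult generators_in_gen_alg)
  ultimately show ?case by blast
qed

lemma eval3_free_pair:
  fixes N w :: "'k::idom mpoly3" and n :: "'k poly poly"
  assumes "0 < degree w" "degree w < degree N" "0 < degree n"
  shows "eval3 P1 N [:n:] X3 + eval3 P2 N [:n:] X3 * w = 0 \<Longrightarrow> P1 = 0 \<and> P2 = 0"
proof (induct P1 P2 rule: poly_induct2)
  case (pCons c1 P1 c2 P2)
  define c where "c = [:pcompose c1 n:] + [:pcompose c2 n:] * w"
  define x where "x = eval3 P1 N [:n:] X3 + eval3 P2 N [:n:] X3 * w"
  have eq: "c + N * x = 0"
    using pCons.prems unfolding c_def x_def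
    by (simp add: eval3_pCons[of c1] eval3_pCons[of c2] eval3_const_poly algebra_simps)
  have "degree ([:pcompose c2 n:] * w) \<le> degree w"
    using degree_mult_le[of "[:pcompose c2 n:]" w] by simp
  then have "degree c \<le> degree w"
    unfolding c_def by (intro degree_add_le) simp_all
  with assms(2) have "degree c < degree N"
    by simp
  then have x0: "x = 0" and "c = 0"
    using eq by (rule degree_less_add_mult_eq_0)+
  then have "coeff c (degree w) = 0" by simp
  then have "pcompose c2 n * lead_coeff w = 0"
    using assms(1) unfolding c_def by (cases "degree w") simp_all
  moreover have "lead_coeff w \<noteq> 0"
    using assms(1) by auto
  ultimately have "pcompose c2 n = 0" by simp
  then have "c2 = 0"
    using assms(3) by (simp add: pcompose_eq_0_iff)
  moreover have "c1 = 0"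
    using \<open>c = 0\<close> \<open>c2 = 0\<close> assms(3) unfolding c_def by (simp add: pcompose_eq_0_iff)
  moreover have "P1 = 0 \<and> P2 = 0"
    using pCons.hyps x0 unfolding x_def by blast
  ultimately show ?case by simp
qed simp

lemma algA_free:
  fixes a b :: "'k::field mpoly3"
  assumes char2: "(2::'k) = 0" and "a \<in> algA" "b \<in> algA" "a + b * u_elem = 0"
  shows "a = 0 \<and> b = 0"
proof -
  obtain P1 P2 where P: "a = eval3 P1 NG_x1 [:norm2:] X3" "b = eval3 P2 NG_x1 [:norm2:] X3"
    using assms(2,3) by (auto simp: gen_alg_def NGH_x2_nested)
  then have "P1 = 0 \<and> P2 = 0"
    using eval3_free_pair[of "u_elem :: 'k mpoly3" NG_x1 norm2 P1 P2] degree_u_elem[where 'k='k]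
      degree_NG_x1[OF char2] assms(4)
    by simp
  then show ?thesis
    using P eval3_const3[of 0] by simp
qed

lemma sigma_fixed_eq:
  assumes char2: "(2::'k::field) = 0"
  shows "{f :: 'k mpoly3. sigma f = f} = {a + b * u_elem | a b. a \<in> algA \<and> b \<in> algA}"
proof (intro equalityI subsetI)
  show "f \<in> {a + b * u_elem | a b. a \<in> algA \<and> b \<in> algA}"
    if "f \<in> {f. sigma f = f}" for f :: "'k mpoly3"
    using sigma_fixed_decomp[OF char2, of f] that by blast
  show "f \<in> {f. sigma f = f}"
    if f: "f \<in> {a + b * u_elem | a b. a \<in> algA \<and> b \<in> algA}" for f :: "'k mpoly3"
  proof -
    obtain a b where ab: "f = a + b * u_elem" "a \<in> algA" "b \<in> algA" using f by blast
    then have "sigma a = a" "sigma b = b"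
      using gen_alg_sigma_fixed[OF char2] by blast+
    then show ?thesis using ab(1) sigma_u_elem[OF char2] by (simp add: sigma_add sigma_mult)
  qed
qed

section \<open>Homogeneous components\<close>

text \<open>If h c is the polynomial in t whose coefficients are the homogeneous components of c,
  then grade_poly h p does the same for polynomials p over the coefficient ring, the variable
  x having degree one: it substitutes t x for x and applies h to the coefficients.\<close>

definition grade_poly :: "('a::comm_ring_1 \<Rightarrow> 'a poly) \<Rightarrow> 'a poly \<Rightarrow> 'a poly poly" where
  "grade_poly h p = poly (map_poly (\<lambda>c. map_poly (\<lambda>a. [:a:]) (h c)) p) [:0, [:0, 1:]:]"

lemma grade_poly_hom:
  assumes h0: "h 0 = 0" and add: "\<And>x y. h (x + y) = h x + h y" and mult: "\<And>x y. h (x * y) = h x * h y"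
  shows "grade_poly h 0 = 0"
    and "grade_poly h (p + q) = grade_poly h p + grade_poly h q"
    and "grade_poly h (p * q) = grade_poly h p * grade_poly h q"
proof -
  have const: "map_poly (\<lambda>a. [:a:]) (x + y) = map_poly (\<lambda>a. [:a:]) x + map_poly (\<lambda>a. [:a:]) y"
    "map_poly (\<lambda>a. [:a:]) (x * y) = map_poly (\<lambda>a. [:a:]) x * map_poly (\<lambda>a. [:a:]) y" for x y :: "'a poly"
    by (simp_all add: map_poly_add_hom map_poly_mult_hom)
  show "grade_poly h 0 = 0"
    by (simp add: grade_poly_def)
  show "grade_poly h (p + q) = grade_poly h p + grade_poly h q"
    and "grade_poly h (p * q) = grade_poly h p * grade_poly h q"
    unfolding grade_poly_def by (simp_all add: poly_map_poly_hom h0 add mult const)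
qed

lemma coeff_grade_poly:
  assumes h0: "h 0 = 0"
  shows "coeff (coeff (grade_poly h p) d) i = (if i \<le> d then coeff (h (coeff p i)) (d - i) else 0)"
proof (induct p arbitrary: d i)
  case (pCons c p)
  have "coeff (grade_poly h (pCons c p)) d =
      [:coeff (h c) d:] + (if d = 0 then 0 else [:0, 1:] * coeff (grade_poly h p) (d - 1))"
    by (simp add: grade_poly_def h0 map_poly_pCons coeff_map_poly coeff_pCons split: nat.split)
  then show ?case using pCons.hyps
    by (cases d; cases i) (auto simp: coeff_pCons)
qed (simp add: grade_poly_def h0)

definition grading3 :: "'k::comm_ring_1 mpoly3 \<Rightarrow> 'k mpoly3 poly" where
  "grading3 = grade_poly (grade_poly (grade_poly (\<lambda>c. [:c:])))"

lemma grading3_add: "grading3 (p + q) = grading3 p + grading3 q"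
  and grading3_mult: "grading3 (p * q) = grading3 p * grading3 q"
  unfolding grading3_def by (simp_all add: grade_poly_hom)

lemma coeff3_grading3:
  "coeff3 (coeff (grading3 p) d) i j k = (if i + j + k = d then coeff3 p i j k else 0)"
  by (simp add: grading3_def coeff3_def coeff_grade_poly grade_poly_hom coeff_pCons split: nat.split)
    arith

lemma coeff3_eqI: "(\<And>i j k. coeff3 p i j k = coeff3 q i j k) \<Longrightarrow> p = q"
  by (simp add: coeff3_def poly_eq_iff)

lemma homogeneous_iff_grading3: "homogeneous d p \<longleftrightarrow> grading3 p = monom p d"
proof
  assume hom: "homogeneous d p"
  show "grading3 p = monom p d"
  proof (rule poly_eqI, rule coeff3_eqI)
    fix e i j k
    show "coeff3 (coeff (grading3 p) e) i j k = coeff3 (coeff (monom p d) e) i j k"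
      using hom unfolding coeff3_grading3 homogeneous_def by (auto simp: coeff_monom coeff3_def)
  qed
next
  assume "grading3 p = monom p d"
  then show "homogeneous d p"
    unfolding homogeneous_def by (metis coeff3_grading3 coeff_monom)
qed

lemma homogeneous_coeff_grading3: "homogeneous d (coeff (grading3 p) d)"
  unfolding homogeneous_def coeff3_grading3 by auto

lemma coeff_grading3_homogeneous: "homogeneous d p \<Longrightarrow> coeff (grading3 p) e = (if e = d then p else 0)"
  by (simp add: homogeneous_iff_grading3 coeff_monom)

lemma homogeneous_0 [simp]: "homogeneous d 0"
  by (simp add: homogeneous_def coeff3_def)

lemma homogeneous_add:
  "homogeneous d p \<Longrightarrow> homogeneous d q \<Longrightarrow> homogeneous d (p + q :: 'k::comm_ring_1 mpoly3)"
  unfolding homogeneous_iff_grading3 grading3_add by (simp add: add_monom)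

lemma homogeneous_mult:
  "homogeneous d p \<Longrightarrow> homogeneous e q \<Longrightarrow> homogeneous (d + e) (p * q :: 'k::comm_ring_1 mpoly3)"
  unfolding homogeneous_iff_grading3 grading3_mult by (simp add: mult_monom)

lemma homogeneous_const3: "homogeneous 0 (const3 c)"
  and homogeneous_X1: "homogeneous 1 X1"
  and homogeneous_X2: "homogeneous 1 X2"
  and homogeneous_X3: "homogeneous 1 X3"
  by (simp_all add: homogeneous_def coeff3_def const3_def X1_def X2_def X3_def coeff_pCons split: nat.split)

lemma homogeneous_scale3: "homogeneous d p \<Longrightarrow> homogeneous d (scale3 c p)"
  using homogeneous_mult[OF homogeneous_const3] by (fastforce simp: scale3_def)

lemma homogeneous_NG_x1:
  assumes char2: "(2::'k::comm_ring_1) = 0" shows "homogeneous 4 (NG_x1 :: 'k mpoly3)"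
proof -
  have "homogeneous (1 + 1 + 1 + 1) (X1 * (X1 + X2) * (X1 + X3) * (X1 + X2 + X3) :: 'k mpoly3)"
    by (intro homogeneous_mult homogeneous_add homogeneous_X1 homogeneous_X2 homogeneous_X3)
  then show ?thesis by (simp add: NG_x1_char2[OF char2] numeral_eq_Suc)
qed

lemma homogeneous_NGH_x2: "homogeneous 2 NGH_x2"
proof -
  have "homogeneous (1 + 1) (X2 * (X2 + X3))"
    by (intro homogeneous_mult homogeneous_add homogeneous_X2 homogeneous_X3)
  then show ?thesis by (simp add: NGH_x2_eq numeral_eq_Suc)
qed

lemma homogeneous_u_elem: "homogeneous 3 u_elem"
proof -
  have "homogeneous (1 + 1 + 1) (X1 * X1 * X3 + X1 * X3 * X3 + X2 * X2 * X2 + X2 * X2 * X3)"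
    by (intro homogeneous_mult homogeneous_add homogeneous_X1 homogeneous_X2 homogeneous_X3)
  then show ?thesis
    by (simp add: u_elem_def power2_eq_square power3_eq_cube ac_simps numeral_eq_Suc)
qed

lemma coeff_grading3_gen_alg:
  assumes "homogeneous da a" "homogeneous db b" "homogeneous dc c" and "x \<in> gen_alg a b c"
  shows "coeff (grading3 x) d \<in> gen_alg a b c"
proof -
  let ?S = "{x. \<forall>d. coeff (grading3 x) d \<in> gen_alg a b c}"
  have hom: "x \<in> ?S" if "x \<in> gen_alg a b c" "homogeneous e x" for x e
    using that by (simp add: coeff_grading3_homogeneous zero_in_gen_alg)
  have "gen_alg a b c \<subseteq> ?S"
  proof (rule gen_alg_subset)
    show "x + y \<in> ?S" "x * y \<in> ?S" if "x \<in> ?S" "y \<in> ?S" for x y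
      using that by (auto simp: grading3_add grading3_mult coeff_mult
          intro!: gen_alg_add gen_alg_mult gen_alg_sum)
  qed (use hom[OF const3_in_gen_alg homogeneous_const3] hom[OF generators_in_gen_alg(1) assms(1)]
      hom[OF generators_in_gen_alg(2) assms(2)] hom[OF generators_in_gen_alg(3) assms(3)] in auto)
  then show ?thesis using assms(4) by blast
qed

lemma graded_sigma_fixed_decomp:
  fixes f :: "'k::field mpoly3"
  assumes char2: "(2::'k) = 0" and "sigma f = f" "homogeneous d f"
  shows "\<exists>a b. a \<in> graded_part algA d \<and> b \<in> graded_part algA (d - 3) \<and> (d < 3 \<longrightarrow> b = 0)
    \<and> f = a + b * u_elem"
proof -
  obtain a b where ab: "a \<in> algA" "b \<in> algA" "f = a + b * u_elem"
    using sigma_fixed_decomp[OF char2 assms(2)] by blast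
  note graded = coeff_grading3_gen_alg[OF homogeneous_NG_x1[OF char2] homogeneous_NGH_x2 homogeneous_X3]
  define b' where "b' = (if d < 3 then 0 else coeff (grading3 b) (d - 3))"
  have u: "grading3 u_elem = monom u_elem 3"
    using homogeneous_u_elem homogeneous_iff_grading3 by blast
  have "f = coeff (grading3 f) d"
    using coeff_grading3_homogeneous[OF assms(3)] by simp
  also have "\<dots> = coeff (grading3 a) d + b' * u_elem"
    unfolding ab(3) b'_def grading3_add grading3_mult u
    by (simp add: coeff_monom_mult mult.commute[of _ "monom _ _"] mult.commute[of _ u_elem])
  finally have "f = coeff (grading3 a) d + b' * u_elem" .
  moreover have "coeff (grading3 a) d \<in> graded_part algA d"
    using graded[OF ab(1)] homogeneous_coeff_grading3 by (simp add: graded_part_def)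
  moreover have "b' \<in> graded_part algA (d - 3)"
    using graded[OF ab(2)] homogeneous_coeff_grading3 zero_in_gen_alg
    by (auto simp: graded_part_def b'_def)
  moreover have "d < 3 \<longrightarrow> b' = 0"
    by (simp add: b'_def)
  ultimately show ?thesis by blast
qed

section \<open>Dimensions of the graded pieces\<close>

lemma (in vector_space) independent_Un_direct:
  assumes S: "independent S" and T: "independent T"
    and direct: "\<And>x y. x \<in> span S \<Longrightarrow> y \<in> span T \<Longrightarrow> x + y = 0 \<Longrightarrow> x = 0"
  shows "independent (S \<union> T)"
proof
  assume "dependent (S \<union> T)"
  then obtain U u where U: "finite U" "U \<subseteq> S \<union> T" "(\<Sum>w\<in>U. scale (u w) w) = 0"
    and "\<exists>v\<in>U. u v \<noteq> 0"
    unfolding dependent_explicit by blast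
  then obtain v where v: "v \<in> U" "u v \<noteq> 0" by blast
  define x y where "x = (\<Sum>w\<in>U \<inter> S. scale (u w) w)" and "y = (\<Sum>w\<in>U - S. scale (u w) w)"
  have "x + y = (\<Sum>w\<in>U. scale (u w) w)"
    unfolding x_def y_def by (rule sum.Int_Diff[OF U(1), symmetric])
  then have "x + y = 0" using U(3) by simp
  moreover have "x \<in> span S" "y \<in> span T"
    unfolding x_def y_def using U(2) by (intro span_sum span_scale span_base; auto)+
  ultimately have "x = 0" using direct by blast
  with \<open>x + y = 0\<close> have "y = 0" by simp
  then show False
    using independentD[OF S _ _ \<open>x = 0\<close>[unfolded x_def]] independentD[OF T _ _ \<open>y = 0\<close>[unfolded y_def]]
      U v by blast
qed

lemma (in vector_space) dim_direct_sum_image: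
  assumes S: "subspace S" "finite BS" "S \<subseteq> span BS"
    and T: "subspace T" "finite BT" "T \<subseteq> span BT"
    and lin: "Vector_Spaces.linear scale scale f"
    and direct: "\<And>x y. x \<in> S \<Longrightarrow> y \<in> T \<Longrightarrow> x + f y = 0 \<Longrightarrow> x = 0 \<and> y = 0"
  shows "dim {x + f y | x y. x \<in> S \<and> y \<in> T} = dim S + dim T"
proof -
  interpret f: Vector_Spaces.linear scale scale f by (rule lin)
  obtain B1 where B1: "B1 \<subseteq> S" "independent B1" "S \<subseteq> span B1" "card B1 = dim S"
    using basis_exists by blast
  obtain B2 where B2: "B2 \<subseteq> T" "independent B2" "T \<subseteq> span B2" "card B2 = dim T"
    using basis_exists by blast
  have fin: "finite B1" "finite B2"
    using independent_span_bound B1 B2 S T by (meson subset_trans)+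
  have span: "span B1 = S" "span (f ` B2) = f ` T"
    using B1 B2 S T f.span_image by (simp_all add: span_subspace)
  have inj: "inj_on f T"
    using direct[of 0] T(1) S(1) by (simp add: f.inj_on_iff_eq_0 subspace_0)
  have direct': "x = 0" if "x \<in> span B1" "y \<in> span (f ` B2)" "x + y = 0" for x y
    using that direct span by auto
  have indep: "independent (B1 \<union> f ` B2)"
  proof (rule independent_Un_direct[OF B1(2) _ direct'])
    show "independent (f ` B2)"
      using f.independent_injective_image[OF B2(2)] inj B2 T(1) by (simp add: span_subspace)
  qed
  have "B1 \<inter> f ` B2 = {}"
  proof safe
    fix y assume "f y \<in> B1" "y \<in> B2"
    then have "f y = 0"
      using direct'[of "f y" "- f y"] by (simp add: span_base span_neg)
    then show "f y \<in> {}" using \<open>f y \<in> B1\<close> B1(2) dependent_zero by metis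
  qed
  then have "card (B1 \<union> f ` B2) = dim S + dim T"
    using fin B1(4) B2(4) inj B2(1) by (simp add: card_Un_disjoint card_image inj_on_subset)
  moreover have "{x + f y | x y. x \<in> S \<and> y \<in> T} = span (B1 \<union> f ` B2)"
    unfolding span_Un span by blast
  ultimately show ?thesis
    using indep by (simp add: dim_eq_card_independent)
qed

interpretation vs: vector_space "scale3 :: 'k::field \<Rightarrow> 'k mpoly3 \<Rightarrow> 'k mpoly3"
  by unfold_locales (simp_all add: scale3_def const3_add const3_mult algebra_simps)

lemma subspace_gen_alg: "vs.subspace (gen_alg a b c)"
  by (intro vs.subspaceI) (simp_all add: scale3_def zero_in_gen_alg gen_alg_add gen_alg_mult const3_in_gen_alg)

lemma subspace_graded_part: "vs.subspace M \<Longrightarrow> vs.subspace (graded_part M d)"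
  unfolding vs.subspace_def graded_part_def by (auto intro: homogeneous_add homogeneous_scale3)

definition monomials_upto :: "nat \<Rightarrow> 'k::comm_ring_1 mpoly3 set" where
  "monomials_upto d = (\<lambda>(i, j, k). monom (monom (monom 1 k) j) i) ` ({..d} \<times> {..d} \<times> {..d})"

lemma card_monomials_upto: "finite (monomials_upto d)" "card (monomials_upto d) \<le> (d + 1) ^ 3"
proof -
  show "finite (monomials_upto d)" by (simp add: monomials_upto_def)
  have "card (monomials_upto d) \<le> card ({..d} \<times> {..d} \<times> {..d})"
    unfolding monomials_upto_def by (rule card_image_le) simp
  also have "\<dots> = (d + 1) ^ 3"
    by (simp add: card_cartesian_product power3_eq_cube)
  finally show "card (monomials_upto d) \<le> (d + 1) ^ 3" .
qed

lemma homogeneous_in_span_monomials_upto: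
  fixes p :: "'k::field mpoly3"
  assumes "homogeneous d p"
  shows "p \<in> vs.span (monomials_upto d)"
proof -
  define B where "B = {..d} \<times> {..d} \<times> {..d}"
  define m where "m = (\<lambda>(i, j, k). monom (monom (monom 1 k) j) i :: 'k mpoly3)"
  have coeff3_m: "coeff3 (m x) i j k = (if x = (i, j, k) then 1 else 0)" for x i j k
    by (cases x) (auto simp: m_def coeff3_def coeff_monom)
  have "coeff3 (\<Sum>x\<in>B. scale3 (coeff3 p (fst x) (fst (snd x)) (snd (snd x))) (m x)) i j k
      = (\<Sum>x\<in>B. if x = (i, j, k) then coeff3 p i j k else 0)" for i j k
    unfolding coeff3_def coeff_sum
    by (intro sum.cong refl) (auto simp: scale3_def const3_def coeff3_m[unfolded coeff3_def])
  also have "\<dots> i j k = coeff3 p i j k" for i j k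
  proof (cases "coeff3 p i j k = 0")
    case False
    then have "i + j + k = d" using assms by (simp add: homogeneous_def)
    then show ?thesis by (simp add: B_def sum.delta')
  qed (simp add: B_def sum.delta')
  finally have "p = (\<Sum>x\<in>B. scale3 (coeff3 p (fst x) (fst (snd x)) (snd (snd x))) (m x))"
    by (intro coeff3_eqI) simp
  also have "\<dots> \<in> vs.span (monomials_upto d)"
    by (intro vs.span_sum vs.span_scale vs.span_base) (auto simp: monomials_upto_def m_def B_def)
  finally show ?thesis .
qed

lemma graded_part_subset_span: "graded_part (M :: 'k::field mpoly3 set) d \<subseteq> vs.span (monomials_upto d)"
  using homogeneous_in_span_monomials_upto by (auto simp: graded_part_def)

lemma dim_graded_part_le: "vs.dim (graded_part (M :: 'k::field mpoly3 set) d) \<le> (d + 1) ^ 3"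
  using vs.dim_le_card[OF graded_part_subset_span card_monomials_upto(1)] card_monomials_upto(2)
  by (rule order_trans)

lemma dim_graded_part_pos:
  assumes "x \<in> graded_part (M :: 'k::field mpoly3 set) d" "x \<noteq> 0"
  shows "0 < vs.dim (graded_part M d)"
proof (rule ccontr)
  obtain B where B: "B \<subseteq> graded_part M d" "vs.independent B" "graded_part M d \<subseteq> vs.span B"
    "card B = vs.dim (graded_part M d)"
    using vs.basis_exists by blast
  assume "\<not> 0 < vs.dim (graded_part M d)"
  moreover have "finite B"
    using vs.independent_span_bound[OF card_monomials_upto(1) B(2)] B(1) graded_part_subset_span
    by blast
  ultimately have "B = {}" using B(4) by simp
  then show False using B(3) assms by auto
qed

lemma graded_part_sigma_fixed:
  fixes d :: nat
  assumes char2: "(2::'k::field) = 0"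
  defines "T \<equiv> if 3 \<le> d then graded_part algA (d - 3) else {0}"
  shows "graded_part {f :: 'k mpoly3. sigma f = f} d
    = {x + y * u_elem | x y. x \<in> graded_part algA d \<and> y \<in> T}"
proof (intro equalityI subsetI)
  fix f assume "f \<in> graded_part {f :: 'k mpoly3. sigma f = f} d"
  then have "sigma f = f" "homogeneous d f"
    by (simp_all add: graded_part_def)
  then obtain a b where "a \<in> graded_part algA d" "b \<in> graded_part algA (d - 3)" "d < 3 \<longrightarrow> b = 0"
    "f = a + b * u_elem"
    using graded_sigma_fixed_decomp[OF char2] by blast
  then show "f \<in> {x + y * u_elem | x y. x \<in> graded_part algA d \<and> y \<in> T}"
    unfolding T_def by (cases "3 \<le> d") auto
next
  fix f assume "f \<in> {x + y * u_elem | x y. x \<in> graded_part algA d \<and> y \<in> T}"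
  then obtain x y where f: "f = x + y * u_elem" and x: "x \<in> algA" "homogeneous d x"
    and y: "y \<in> algA" "3 \<le> d \<Longrightarrow> homogeneous (d - 3) y" "\<not> 3 \<le> d \<Longrightarrow> y = 0"
    unfolding T_def graded_part_def by (auto split: if_splits simp: zero_in_gen_alg)
  have "sigma f = f"
    using sigma_fixed_eq[OF char2] f x(1) y(1) by blast
  moreover have "homogeneous d (y * u_elem)"
    using homogeneous_mult[OF y(2) homogeneous_u_elem] y(3) by (cases "3 \<le> d") simp_all
  ultimately show "f \<in> graded_part {f. sigma f = f} d"
    using f x(2) by (simp add: graded_part_def homogeneous_add)
qed

lemma dim_graded_part_sigma_fixed:
  assumes char2: "(2::'k::field) = 0"
  shows "vs.dim (graded_part {f :: 'k mpoly3. sigma f = f} d)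
    = vs.dim (graded_part (algA :: 'k mpoly3 set) d)
      + (if 3 \<le> d then vs.dim (graded_part (algA :: 'k mpoly3 set) (d - 3)) else 0)"
proof -
  define T where "T = (if 3 \<le> d then graded_part algA (d - 3) else {0 :: 'k mpoly3})"
  have "vs.dim T = (if 3 \<le> d then vs.dim (graded_part (algA :: 'k mpoly3 set) (d - 3)) else 0)"
    using vs.dim_le_card[of "{0 :: 'k mpoly3}" "{}"] by (simp add: T_def)
  moreover have "vs.dim (graded_part {f :: 'k mpoly3. sigma f = f} d)
      = vs.dim (graded_part (algA :: 'k mpoly3 set) d) + vs.dim T"
    unfolding graded_part_sigma_fixed[OF char2, of d, folded T_def]
  proof (rule vs.dim_direct_sum_image[where BS = "monomials_upto d" and BT = "monomials_upto (d - 3)"])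
    show "vs.subspace T"
      by (simp add: T_def subspace_graded_part subspace_gen_alg)
    show "T \<subseteq> vs.span (monomials_upto (d - 3))"
      using graded_part_subset_span vs.span_zero by (auto simp: T_def)
    show "Vector_Spaces.linear scale3 scale3 (\<lambda>y. y * u_elem)"
      unfolding Vector_Spaces.linear_iff using vs.vector_space_axioms
      by (simp add: scale3_def algebra_simps)
    show "x = 0 \<and> y = 0" if "x \<in> graded_part algA d" "y \<in> T" "x + y * u_elem = 0" for x y
      using that algA_free[OF char2, of x y] zero_in_gen_alg
      by (auto simp: T_def graded_part_def split: if_splits)
  qed (simp_all add: subspace_graded_part subspace_gen_alg graded_part_subset_span card_monomials_upto)
  ultimately show ?thesis by simp
qed

section \<open>Hilbert series\<close>

lemma summable_polynomial_growth:
  fixes a :: "nat \<Rightarrow> real"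
  assumes "\<And>d. \<bar>a d\<bar> \<le> (real d + 1) ^ 3" and "\<bar>t\<bar> < 1"
  shows "summable (\<lambda>d. a d * t ^ d)"
proof -
  have "conv_radius (\<lambda>d. (real d + 1) ^ 3) = 1"
    by (rule conv_radius_ratio_limit_nonzero[of _ 1]) (simp_all, real_asymp)
  then have "summable (\<lambda>d. (real d + 1) ^ 3 * \<bar>t\<bar> ^ d)"
    using assms(2) by (intro summable_in_conv_radius) simp
  then show ?thesis
    by (rule summable_comparison_test'[where N = 0])
      (simp add: abs_mult power_abs mult_right_mono assms(1))
qed

lemma suminf_add_shifted:
  fixes a :: "nat \<Rightarrow> real"
  assumes "summable (\<lambda>d. a d * t ^ d)"
  shows "(\<Sum>d. (a d + (if k \<le> d then a (d - k) else 0)) * t ^ d) = (1 + t ^ k) * (\<Sum>d. a d * t ^ d)"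
proof -
  define g where "g d = (if k \<le> d then a (d - k) else 0) * t ^ d" for d
  have "(\<lambda>i. g (i + k)) sums (t ^ k * (\<Sum>d. a d * t ^ d))"
    using sums_mult[OF summable_sums[OF assms], of "t ^ k"]
    by (simp add: g_def power_add algebra_simps)
  then have "g sums (t ^ k * (\<Sum>d. a d * t ^ d))"
    by (subst (asm) sums_zero_iff_shift) (auto simp: g_def)
  from sums_add[OF summable_sums[OF assms] this] show ?thesis
    by (simp add: g_def sums_iff algebra_simps)
qed

lemma r_inv_s_inv_of_ratio:
  assumes "\<forall>\<^sub>F t in at_left 1. hilbert M t = (1 + t ^ k) * hilbert A t \<and> hilbert A t \<noteq> 0"
  shows "r_inv M A = 2" and "s_inv M A = k"
proof -
  have ratio: "\<forall>\<^sub>F t in at_left 1. hilbert M t / hilbert A t = 1 + t ^ k"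
    using assms by eventually_elim simp
  have "((\<lambda>t. hilbert M t / hilbert A t) \<longlongrightarrow> 1 + 1 ^ k) (at_left (1::real))"
    by (rule tendsto_cong[OF ratio, THEN iffD2]) (intro tendsto_intros)
  then show r: "r_inv M A = 2"
    unfolding r_inv_def by (intro tendsto_Lim) simp_all
  have "\<forall>\<^sub>F t in at_left (1::real). t < 1"
    by (simp add: eventually_at_filter)
  then have "\<forall>\<^sub>F t in at_left 1. (hilbert M t / hilbert A t - 2) / (t - 1) = (\<Sum>i<k. t ^ i)"
    using ratio
  proof eventually_elim
    case (elim t)
    then show ?case by (simp add: power_diff_1_eq)
  qed
  moreover have "((\<lambda>t. \<Sum>i<k. t ^ i) \<longlongrightarrow> (\<Sum>i<k. 1 ^ i)) (at_left (1::real))"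
    by (intro tendsto_intros)
  ultimately have "((\<lambda>t. (hilbert M t / hilbert A t - 2) / (t - 1)) \<longlongrightarrow> real k) (at_left 1)"
    by (simp add: tendsto_cong)
  then show "s_inv M A = k"
    unfolding s_inv_def r by (intro tendsto_Lim) simp_all
qed

lemma hilbert_sigma_fixed:
  assumes char2: "(2::'k::field) = 0" and t: "0 < t" "t < 1"
  shows "hilbert {f :: 'k mpoly3. sigma f = f} t = (1 + t ^ 3) * hilbert (algA :: 'k mpoly3 set) t"
    and "0 < hilbert (algA :: 'k mpoly3 set) t"
proof -
  define a where "a d = real (vs.dim (graded_part (algA :: 'k mpoly3 set) d))" for d
  have "a d \<le> real ((d + 1) ^ 3)" for d
    unfolding a_def by (rule of_nat_mono[OF dim_graded_part_le])
  then have summable: "summable (\<lambda>d. a d * t ^ d)"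
    using t by (intro summable_polynomial_growth) (simp_all add: a_def add.commute)
  have "hilbert {f :: 'k mpoly3. sigma f = f} t = (\<Sum>d. (a d + (if 3 \<le> d then a (d - 3) else 0)) * t ^ d)"
    unfolding hilbert_def dim_graded_part_sigma_fixed[OF char2] a_def
    by (intro arg_cong[where f = suminf] ext) simp
  also have "\<dots> = (1 + t ^ 3) * hilbert (algA :: 'k mpoly3 set) t"
    unfolding suminf_add_shifted[OF summable] by (simp add: hilbert_def a_def)
  finally show "hilbert {f :: 'k mpoly3. sigma f = f} t = (1 + t ^ 3) * hilbert (algA :: 'k mpoly3 set) t" .
  have "1 \<in> graded_part (algA :: 'k mpoly3 set) 0"
    using const3_in_gen_alg[of 1] homogeneous_const3[of "1::'k"] by (simp add: graded_part_def)
  then have "0 < a 0"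
    unfolding a_def using dim_graded_part_pos by fastforce
  with t have "0 < (\<Sum>d. a d * t ^ d)"
    by (intro suminf_pos2[OF summable, of 0]) (simp_all add: a_def)
  then show "0 < hilbert (algA :: 'k mpoly3 set) t"
    by (simp add: hilbert_def a_def)
qed

theorem mainTheorem13:
  fixes dummy :: "'k::field itself"
  assumes "CHAR('k) = 2"
  defines "A \<equiv> gen_alg (NG_x1 :: 'k mpoly3) NGH_x2 X3"
  shows "invariants = {a + b * u_elem | a b. a \<in> A \<and> b \<in> A}
     \<and> (\<forall>a\<in>A. \<forall>b\<in>A. a + b * u_elem = 0 \<longrightarrow> a = 0 \<and> b = 0)
     \<and> r_inv (invariants :: 'k mpoly3 set) A = 2
     \<and> s_inv (invariants :: 'k mpoly3 set) A = 3"
proof -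
  have char2: "(2::'k) = 0"
    using of_nat_CHAR[where 'a='k] assms(1) by simp
  have "\<forall>\<^sub>F t in at_left (1::real). t \<in> {0<..<1}"
    by (rule eventually_at_left_real) simp
  then have "\<forall>\<^sub>F t in at_left 1.
      hilbert {f :: 'k mpoly3. sigma f = f} t = (1 + t ^ 3) * hilbert A t \<and> hilbert A t \<noteq> 0"
    by eventually_elim (use hilbert_sigma_fixed[OF char2] in \<open>force simp: A_def\<close>)
  from r_inv_s_inv_of_ratio[OF this] show ?thesis
    using sigma_fixed_eq[OF char2] algA_free[OF char2] unfolding invariants_eq A_def by auto
qed

end
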